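(* Suppose the second-order condition of the context holds with $\gamma_0>-1/2$ and the intermediate sequence $(k_n)$ satisfies $\Phi(k_n/n)=O(k_n^{-1/2})$. With $Q_n$, $\tilde a$ as in the context and $$Y_n(t)=k_n^{1/2}\Big(\frac{Q_n(t)-Q_n(1)}{\tilde a(k_n/n)}-\frac{t^{-\gamma_0}-1}{\gamma_0}\Big),$$ for every $\varepsilon>0$ we have, as $n\to\infty$, $$\sup_{0<t\le1}t^{\gamma_0+1/2+\varepsilon}|Y_n(t)|=O_p(1).$$
   Context: Let $X_1,X_2,\dots$ be i.i.d. with distribution function $F$, $F^{\leftarrow}$ its generalized inverse, $X_{1,n}\le\dots\le X_{n,n}$ the order statistics; $(k_n)$ is intermediate: $k_n\to\infty$, $k_n/n\to0$. $(t^{-\gamma_0}-1)/\gamma_0$ is read as $-\log t$ when $\gamma_0=0$. Second-order condition: there exist $\gamma_0>-1/2$ and measurable, locally bounded $a,\Phi:(0,1)\to(0,\infty)$, $\Psi:(0,\infty)\to\mathbb R$ with $\lim_{t\downarrow0}\big[(F^{\leftarrow}(1-tx)-F^{\leftarrow}(1-t))/a(t)-(x^{-\gamma_0}-1)/\gamma_0\big]/\Phi(t)=\Psi(x)$ for all $x>0$, $x\mapsto\Psi(x)/(x^{-\gamma_0}-1)$ not constant, $\Phi$ eventually not changing sign, $\Phi(t)\to0$ as $t\downarrow0$. Construction: on a suitable probability space there are a standard Brownian motion $W$ and processes $Q_n$ with $(Q_n(t))_{t\in[0,1]}\overset{d}{=}(X_{n-[k_nt],n})_{t\in[0,1]}$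 for each $n$, and functions $\tilde a(k_n/n)=a(k_n/n)(1+o(\Phi(k_n/n)))$, $\tilde\Phi(k_n/n)\sim\Phi(k_n/n)$, such that for all $\varepsilon>0$, $\sup_{t\in(0,1]}t^{\gamma_0+1/2+\varepsilon}\big|\frac{Q_n(t)-F^{\leftarrow}(1-k_n/n)}{\tilde a(k_n/n)}-\big(\frac{t^{-\gamma_0}-1}{\gamma_0}-t^{-(\gamma_0+1)}\frac{W(k_nt)}{k_n}+\tilde\Phi(\frac{k_n}{n})\Psi(t)\big)\big|=o_p(k_n^{-1/2})+o_p(\tilde\Phi(k_n/n))$. *)

theory Defs
  imports "HOL-Probability.Probability" "HOL-Library.Landau_Symbols"
begin

definition gen_inv :: "(real \<Rightarrow> real) \<Rightarrow> real \<Rightarrow> real" where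
  "gen_inv F p = Inf {x. p \<le> F x}"

definition hfun :: "real \<Rightarrow> real \<Rightarrow> real" where
  "hfun g x = (if g = 0 then - ln x else (x powr (- g) - 1) / g)"

text \<open>Order statistic X_{j,n} (1-based j) of X_1, ..., X_n.\<close>
definition order_stat :: "(nat \<Rightarrow> 'b \<Rightarrow> real) \<Rightarrow> nat \<Rightarrow> nat \<Rightarrow> 'b \<Rightarrow> real" where
  "order_stat X n j \<omega> = sort (map (\<lambda>i. X i \<omega>) [1..<Suc n]) ! (j - 1)"

definition locally_bounded_on :: "real set \<Rightarrow> (real \<Rightarrow> real) \<Rightarrow> bool" where
  "locally_bounded_on S f \<longleftrightarrow> (\<forall>K. compact K \<and> K \<subseteq> S \<longrightarrow> bounded (f ` K))"

definition std_brownian_motion :: "'a measure \<Rightarrow> (real \<Rightarrow> 'a \<Rightarrow> real) \<Rightarrow> bool" where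
  "std_brownian_motion M W \<longleftrightarrow>
     (\<forall>t\<ge>0. W t \<in> borel_measurable M) \<and>
     (AE \<omega> in M. W 0 \<omega> = 0) \<and>
     (AE \<omega> in M. continuous_on {0..} (\<lambda>t. W t \<omega>)) \<and>
     (\<forall>s t. 0 \<le> s \<and> s < t \<longrightarrow>
        distributed M lborel (\<lambda>\<omega>. W t \<omega> - W s \<omega>)
          (\<lambda>x. ennreal (normal_density 0 (sqrt (t - s)) x))) \<and>
     (\<forall>(ts :: nat \<Rightarrow> real) m. 0 \<le> ts 0 \<and> (\<forall>i<m. ts i < ts (Suc i)) \<longrightarrow>
        prob_space.indep_vars M (\<lambda>_. borel) (\<lambda>i \<omega>. W (ts (Suc i)) \<omega> - W (ts i) \<omega>) {..<m})"

text \<open>Outer-probability versions of stochastic order symbols for the supremum over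
  t in (0,1] of a random process G n t: sup = O_p(1), and sup = o_p(r n).\<close>
definition sup_Op1 :: "'a measure \<Rightarrow> (nat \<Rightarrow> real \<Rightarrow> 'a \<Rightarrow> real) \<Rightarrow> bool" where
  "sup_Op1 M G \<longleftrightarrow> (\<forall>\<delta>>0. \<exists>C. \<forall>\<^sub>F n in sequentially. \<exists>A\<in>sets M.
     {\<omega>\<in>space M. \<exists>t\<in>{0<..1}. \<bar>G n t \<omega>\<bar> > C} \<subseteq> A \<and> measure M A < \<delta>)"

definition sup_op :: "'a measure \<Rightarrow> (nat \<Rightarrow> real \<Rightarrow> 'a \<Rightarrow> real) \<Rightarrow> (nat \<Rightarrow> real) \<Rightarrow> bool" where
  "sup_op M G r \<longleftrightarrow> (\<forall>\<eta>>0. \<forall>\<delta>>0. \<forall>\<^sub>F n in sequentially. \<exists>A\<in>sets M.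
     {\<omega>\<in>space M. \<exists>t\<in>{0<..1}. \<bar>G n t \<omega>\<bar> > \<eta> * r n} \<subseteq> A \<and> measure M A < \<delta>)"

end

(*
  Subtracting the strong approximation at t = 1 from the one at t (hfun 1 = 0), sqrt k times
  the weighted increment becomes a sum of three kinds of terms: the two weighted remainders,
  which stay O_p(1) after multiplication by sqrt k because Phi(k/n) = O(k^(-1/2)); the Brownian
  terms t^(-(gamma+1)) W(k t)/k and W(k)/k; and Phi(k/n) (Psi t - Psi 1).
  The Brownian terms are controlled by |W(K t)| <= C sqrt K t^(1/2-e), uniformly in t and K
  outside an event of small probability: high Gaussian moments make all dyadic increments of
  W(K .) small at once, and chaining along dyadic expansions extends this to every t.
  Finally t^(gamma+1/2+eps) Psi t is bounded: at a single large n the process Q_n is a.s.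
  monotone in t (it has the law of order statistics) with tight endpoints, so the deterministic
  drift Phi Psi t that it tracks is bounded with positive probability, hence outright.
*)
theory Submission
  imports Defs
begin

section \<open>Properties holding outside events of small probability\<close>

definition holds_except :: "'a measure \<Rightarrow> real \<Rightarrow> ('a \<Rightarrow> bool) \<Rightarrow> bool" where
  "holds_except M \<delta> P \<longleftrightarrow> (\<exists>A\<in>sets M. measure M A < \<delta> \<and> {\<omega>\<in>space M. \<not> P \<omega>} \<subseteq> A)"

lemma holds_exceptI:
  assumes "A \<in> sets M" "measure M A < \<delta>" "\<And>\<omega>. \<omega> \<in> space M \<Longrightarrow> \<omega> \<notin> A \<Longrightarrow> P \<omega>"
  shows "holds_except M \<delta> P"
  using assms unfolding holds_except_def by blast

lemma holds_except_mono:
  assumes "holds_except M \<delta> P" "\<delta> \<le> \<delta>'" "\<And>\<omega>. \<omega> \<in> space M \<Longrightarrow> P \<omega> \<Longrightarrow> Q \<omega>"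
  shows "holds_except M \<delta>' Q"
proof -
  obtain A where "A \<in> sets M" "measure M A < \<delta>" "{\<omega>\<in>space M. \<not> P \<omega>} \<subseteq> A"
    using assms(1) unfolding holds_except_def by blast
  with assms(2,3) show ?thesis
    by (intro holds_exceptI[of A]) auto
qed

lemma holds_except_conj:
  assumes "holds_except M \<delta> P" "holds_except M \<delta>' Q"
  shows "holds_except M (\<delta> + \<delta>') (\<lambda>\<omega>. P \<omega> \<and> Q \<omega>)"
proof -
  obtain A B where A: "A \<in> sets M" "measure M A < \<delta>" "{\<omega>\<in>space M. \<not> P \<omega>} \<subseteq> A"
    and B: "B \<in> sets M" "measure M B < \<delta>'" "{\<omega>\<in>space M. \<not> Q \<omega>} \<subseteq> B"
    using assms unfolding holds_except_def by blast
  have "measure M (A \<union> B) < \<delta> + \<delta>'"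
    using measure_Un_le[OF A(1) B(1)] A(2) B(2) by linarith
  then show ?thesis
    using A B by (intro holds_exceptI[of "A \<union> B"]) auto
qed

lemma holds_except_AE:
  assumes "AE \<omega> in M. P \<omega>" "\<delta> > 0"
  shows "holds_except M \<delta> P"
proof -
  obtain N where "{\<omega>\<in>space M. \<not> P \<omega>} \<subseteq> N" "emeasure M N = 0" "N \<in> sets M"
    using assms(1) by (rule AE_E)
  then show ?thesis
    using assms(2) by (intro holds_exceptI[of N]) (auto simp: measure_def)
qed

lemma (in prob_space) holds_except_witness:
  assumes "holds_except M \<delta> P" "\<delta> \<le> 1"
  obtains \<omega> where "\<omega> \<in> space M" "P \<omega>"
proof -
  obtain A where A: "A \<in> sets M" "prob A < 1" "{\<omega>\<in>space M. \<not> P \<omega>} \<subseteq> A"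
    using assms unfolding holds_except_def by force
  have "space M \<noteq> A"
    using A(2) prob_space by auto
  then show ?thesis
    using A(1,3) sets.sets_into_space that by blast
qed

lemma (in prob_space) holds_except_abs_bounded:
  fixes Y :: "'a \<Rightarrow> real"
  assumes "Y \<in> borel_measurable M" "\<delta> > 0"
  obtains z where "holds_except M \<delta> (\<lambda>\<omega>. \<bar>Y \<omega>\<bar> \<le> z)"
proof -
  define A where "A m = {\<omega>\<in>space M. \<bar>Y \<omega>\<bar> > real m}" for m :: nat
  have A_sets: "range A \<subseteq> sets M"
    unfolding A_def using assms(1) by auto
  have "\<omega> \<notin> A (nat \<lceil>\<bar>Y \<omega>\<bar>\<rceil>)" for \<omega>
    by (simp add: A_def not_less)
  then have "(\<Inter>m. A m) = {}"
    by blast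
  moreover have "decseq A"
    unfolding A_def decseq_def by auto
  ultimately have "(\<lambda>m. prob (A m)) \<longlonglongrightarrow> 0"
    using finite_Lim_measure_decseq[OF A_sets] by simp
  then have "\<forall>\<^sub>F m in sequentially. prob (A m) < \<delta>"
    using assms(2) by (rule order_tendstoD)
  then obtain m where "prob (A m) < \<delta>"
    by (auto simp: eventually_sequentially)
  then have "holds_except M \<delta> (\<lambda>\<omega>. \<bar>Y \<omega>\<bar> \<le> real m)"
    using A_sets by (intro holds_exceptI[of "A m"]) (auto simp: A_def)
  then show ?thesis by (rule that)
qed

lemma sup_Op1_iff_holds_except:
  "sup_Op1 M G \<longleftrightarrow>
     (\<forall>\<delta>>0. \<exists>C. \<forall>\<^sub>F n in sequentially. holds_except M \<delta> (\<lambda>\<omega>. \<forall>t\<in>{0<..1}. \<bar>G n t \<omega>\<bar> \<le> C))"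
  unfolding sup_Op1_def holds_except_def by (simp add: not_le conj_commute)

lemma sup_op_holds_except:
  assumes "sup_op M G r" "\<delta> > 0"
  shows "\<forall>\<^sub>F n in sequentially. holds_except M \<delta> (\<lambda>\<omega>. \<forall>t\<in>{0<..1}. \<bar>G n t \<omega>\<bar> \<le> r n)"
proof -
  have "\<forall>\<^sub>F n in sequentially. \<exists>A\<in>sets M.
          {\<omega>\<in>space M. \<exists>t\<in>{0<..1}. \<bar>G n t \<omega>\<bar> > 1 * r n} \<subseteq> A \<and> measure M A < \<delta>"
    using assms zero_less_one unfolding sup_op_def by blast
  then show ?thesis
    unfolding holds_except_def by (simp add: not_le conj_commute)
qed

section \<open>Dyadic chaining\<close>

lemma powr_le_powr_mult_powr:
  fixes u t :: real
  assumes "0 < u" "u \<le> t" "\<theta> \<le> \<beta>"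
  shows "u powr \<beta> \<le> t powr (\<beta> - \<theta>) * u powr \<theta>"
proof -
  have "u powr \<beta> = u powr (\<beta> - \<theta>) * u powr \<theta>"
    by (simp flip: powr_add)
  also have "\<dots> \<le> t powr (\<beta> - \<theta>) * u powr \<theta>"
    using assms by (intro mult_right_mono powr_mono2) auto
  finally show ?thesis .
qed

lemma dyadic_chaining:
  fixes g :: "real \<Rightarrow> real"
  assumes g0: "g 0 = 0" and D: "D \<ge> 0" and \<theta>: "0 < \<theta>" "\<theta> < \<beta>"
    and inc: "\<And>l i. i < 2^l \<Longrightarrow> \<bar>g (real (i+1) / 2^l) - g (real i / 2^l)\<bar> \<le> D * ((1/2)^l) powr \<beta>"
    and j: "j \<le> 2^L"
  shows "\<bar>g (real j / 2^L)\<bar> \<le> D * (real j / 2^L) powr (\<beta> - \<theta>) * (\<Sum>l\<le>L. ((1/2)^l) powr \<theta>)"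
  using j
proof (induction L arbitrary: j)
  case 0
  then consider "j = 0" | "j = 1"
    by fastforce
  then show ?case
    using g0 inc[of 0 0] by cases simp_all
next
  case (Suc L)
  define S where "S = (\<Sum>l\<le>L. ((1/2::real)^l) powr \<theta>)"
  define t where "t = real j / 2^Suc L"
  define j' where "j' = j div 2"
  have "S \<ge> 0"
    unfolding S_def by (intro sum_nonneg) simp
  have "j' \<le> 2^L"
    using Suc.prems by (simp add: j'_def)
  then have "\<bar>g (real j' / 2^L)\<bar> \<le> D * (real j' / 2^L) powr (\<beta> - \<theta>) * S"
    unfolding S_def by (rule Suc.IH)
  also have "\<dots> \<le> D * t powr (\<beta> - \<theta>) * S"
    using \<theta> D \<open>S \<ge> 0\<close>
    by (intro mult_right_mono mult_left_mono powr_mono2) (auto simp: t_def j'_def field_simps)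
  finally have parent: "\<bar>g (real j' / 2^L)\<bar> \<le> D * t powr (\<beta> - \<theta>) * S" .
  have sum: "(\<Sum>l\<le>Suc L. ((1/2::real)^l) powr \<theta>) = S + ((1/2)^Suc L) powr \<theta>"
    unfolding S_def by simp
  show ?case
  proof (cases "even j")
    case True
    then have "real j / 2^Suc L = real j' / 2^L"
      unfolding j'_def by (auto simp: field_simps)
    moreover have "0 \<le> D * t powr (\<beta> - \<theta>) * ((1/2)^Suc L) powr \<theta>"
      using D by simp
    ultimately show ?thesis
      using parent unfolding sum t_def by (simp add: algebra_simps)
  next
    case False
    then have j_odd: "j = 2*j' + 1"
      unfolding j'_def by presburger
    define u where "u = (1/2::real)^Suc L"
    have "u \<le> t"
      unfolding t_def u_def using j_odd by (simp add: field_simps)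
    have "\<bar>g t - g (real j' / 2^L)\<bar> \<le> D * u powr \<beta>"
      using inc[of "2*j'" "Suc L"] Suc.prems j_odd by (simp add: t_def u_def mult.commute)
    also have "\<dots> \<le> D * (t powr (\<beta> - \<theta>) * u powr \<theta>)"
      using powr_le_powr_mult_powr[of u t \<theta> \<beta>] \<open>u \<le> t\<close> \<theta> D by (intro mult_left_mono) (auto simp: u_def)
    finally have "\<bar>g t\<bar> \<le> D * t powr (\<beta> - \<theta>) * S + D * (t powr (\<beta> - \<theta>) * u powr \<theta>)"
      using abs_triangle_ineq2[of "g t" "g (real j' / 2^L)"] parent by linarith
    then show ?thesis
      unfolding sum by (simp add: t_def u_def algebra_simps)
  qed
qed

lemma sum_powr_half_le:
  assumes "\<theta> > 0"
  shows "(\<Sum>l\<le>L. ((1/2::real)^l) powr \<theta>) \<le> 1 / (1 - (1/2) powr \<theta>)"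
proof -
  define r where "r = (1/2::real) powr \<theta>"
  have r: "0 \<le> r" "r < 1"
    unfolding r_def using assms powr_less_mono2[of \<theta> "1/2" 1] by auto
  have "((1/2::real)^l) powr \<theta> = r^l" for l
    unfolding r_def by (simp add: powr_powr mult.commute flip: powr_realpow)
  moreover have "(\<Sum>l\<le>L. r^l) \<le> (\<Sum>l. r^l)"
    using r by (intro sum_le_suminf summable_geometric) auto
  ultimately show ?thesis
    using suminf_geometric[of r] r by (simp add: r_def)
qed

lemma dyadic_floor_approx:
  fixes t :: real
  assumes "t \<ge> 0"
  shows "real (nat \<lfloor>t * 2^m\<rfloor>) / 2^m \<le> t" and "(\<lambda>m. real (nat \<lfloor>t * 2^m\<rfloor>) / 2^m) \<longlonglongrightarrow> t"
proof -
  have floor_eq: "real (nat \<lfloor>t * 2^m\<rfloor>) = of_int \<lfloor>t * 2^m\<rfloor>" for m :: nat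
    using assms by simp
  show le: "real (nat \<lfloor>t * 2^m\<rfloor>) / 2^m \<le> t" for m :: nat
    unfolding floor_eq by (simp add: divide_le_eq)
  have ge: "t - (1/2)^m \<le> real (nat \<lfloor>t * 2^m\<rfloor>) / 2^m" for m :: nat
  proof -
    have "(t * 2^m - 1) / 2^m \<le> real (nat \<lfloor>t * 2^m\<rfloor>) / 2^m"
      unfolding floor_eq by (rule divide_right_mono) (linarith, simp)
    then show ?thesis
      by (simp add: field_simps power_one_over)
  qed
  show "(\<lambda>m. real (nat \<lfloor>t * 2^m\<rfloor>) / 2^m) \<longlonglongrightarrow> t"
  proof (rule tendsto_sandwich[of "\<lambda>m. t - (1/2)^m" _ _ "\<lambda>_. t"])
    show "(\<lambda>m. t - (1/2::real)^m) \<longlonglongrightarrow> t"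
      using tendsto_diff[OF tendsto_const LIMSEQ_power_zero[of "1/2::real"]] by simp
  qed (use le ge in auto)
qed

lemma powr_bound_from_dyadics:
  fixes g :: "real \<Rightarrow> real"
  assumes cont: "continuous_on {0..1} g" and \<gamma>: "\<gamma> > 0"
    and dyadic: "\<And>L j. j \<le> 2^L \<Longrightarrow> \<bar>g (real j / 2^L)\<bar> \<le> C * (real j / 2^L) powr \<gamma>"
    and t: "0 < t" "t \<le> 1"
  shows "\<bar>g t\<bar> \<le> C * t powr \<gamma>"
proof -
  define d where "d m = real (nat \<lfloor>t * 2^m\<rfloor>) / 2^m" for m :: nat
  have "d \<longlonglongrightarrow> t" "d m \<le> t" for m
    unfolding d_def using dyadic_floor_approx t by auto
  moreover have "d m \<in> {0..1}" for m
  proof -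
    have "0 \<le> d m"
      by (simp add: d_def)
    then show ?thesis
      using \<open>d m \<le> t\<close> t by simp
  qed
  ultimately have "(\<lambda>m. g (d m)) \<longlonglongrightarrow> g t"
    using t by (intro continuous_on_tendsto_compose[OF cont]) (auto intro: always_eventually)
  moreover have "(\<lambda>m. C * d m powr \<gamma>) \<longlonglongrightarrow> C * t powr \<gamma>"
    using \<open>d \<longlonglongrightarrow> t\<close> \<gamma> t by (intro tendsto_intros) auto
  moreover have "nat \<lfloor>t * 2^m\<rfloor> \<le> 2^m" for m :: nat
  proof -
    have "\<lfloor>t * 2^m\<rfloor> \<le> \<lfloor>(2::real)^m\<rfloor>"
      using t by (intro floor_mono) simp
    then show ?thesis
      by (simp add: nat_le_iff)
  qed
  then have "\<bar>g (d m)\<bar> \<le> C * d m powr \<gamma>" for m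
    unfolding d_def by (rule dyadic)
  ultimately show ?thesis
    by (intro LIMSEQ_le[OF tendsto_rabs]) auto
qed

lemma powr_bound_of_dyadic_increments:
  fixes g :: "real \<Rightarrow> real"
  assumes "continuous_on {0..1} g" "g 0 = 0" "D \<ge> 0" "0 < \<theta>" "\<theta> < \<beta>"
    and "\<And>l i. i < 2^l \<Longrightarrow> \<bar>g (real (i+1) / 2^l) - g (real i / 2^l)\<bar> \<le> D * ((1/2)^l) powr \<beta>"
    and "0 < t" "t \<le> 1"
  shows "\<bar>g t\<bar> \<le> D / (1 - (1/2) powr \<theta>) * t powr (\<beta> - \<theta>)"
proof (rule powr_bound_from_dyadics)
  fix L j :: nat
  assume "j \<le> 2^L"
  then have "\<bar>g (real j / 2^L)\<bar> \<le> D * (real j / 2^L) powr (\<beta> - \<theta>) * (\<Sum>l\<le>L. ((1/2)^l) powr \<theta>)"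
    using assms by (intro dyadic_chaining) auto
  also have "\<dots> \<le> D * (real j / 2^L) powr (\<beta> - \<theta>) * (1 / (1 - (1/2) powr \<theta>))"
    using assms(3,4) by (intro mult_left_mono sum_powr_half_le) auto
  finally show "\<bar>g (real j / 2^L)\<bar> \<le> D / (1 - (1/2) powr \<theta>) * (real j / 2^L) powr (\<beta> - \<theta>)"
    by simp
qed (use assms in auto)

lemma scaled_moment_ratio_le:
  fixes K y \<beta> :: real and p :: nat
  assumes K: "K > 0" and y: "0 < y" "y \<le> 1" and p: "2 \<le> real p * (1 - 2*\<beta>)"
  shows "(K*y)^p / (sqrt K * y powr \<beta>)^(2*p) \<le> y^2"
proof -
  have "sqrt K ^ (2*p) = K^p"
    using K by (simp add: power_mult)
  moreover have "(y powr \<beta>)^(2*p) = y powr (2*p*\<beta>)"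
    using y by (simp add: powr_powr mult.commute flip: powr_realpow)
  ultimately have "(sqrt K * y powr \<beta>)^(2*p) = K^p * y powr (2*p*\<beta>)"
    by (simp add: power_mult_distrib)
  then have "(K*y)^p / (sqrt K * y powr \<beta>)^(2*p) = y powr (real p * (1 - 2*\<beta>))"
    using K y by (simp add: power_mult_distrib powr_realpow[symmetric] powr_diff[symmetric] algebra_simps)
  also have "\<dots> \<le> y powr 2"
    using y p by (intro powr_mono') auto
  finally show ?thesis
    using y by simp
qed

lemma hfun_one [simp]: "hfun \<gamma> 1 = 0"
  by (simp add: hfun_def)

lemma hfun_powr_bounded:
  assumes "c > 0" "c > \<gamma>"
  shows "\<exists>H. \<forall>t\<in>{0<..1}. t powr c * \<bar>hfun \<gamma> t\<bar> \<le> H"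
proof (cases "\<gamma> = 0")
  case True
  have "t powr c * \<bar>hfun \<gamma> t\<bar> \<le> 1 / c" if t: "t \<in> {0<..1}" for t
  proof -
    have "ln (t powr (-c)) \<le> t powr (-c) - 1"
      using t by (intro ln_le_minus_one) simp
    then have "t powr c * (- c * ln t) \<le> t powr c * t powr (-c)"
      using t by (intro mult_left_mono) (auto simp: ln_powr)
    also have "\<dots> = 1"
      using t by (simp flip: powr_add)
    finally show ?thesis
      using True t assms(1) by (simp add: hfun_def field_simps)
  qed
  then show ?thesis
    by blast
next
  case False
  have "t powr c * \<bar>hfun \<gamma> t\<bar> \<le> 2 / \<bar>\<gamma>\<bar>" if t: "t \<in> {0<..1}" for t
  proof -
    have "t powr c * \<bar>hfun \<gamma> t\<bar> = \<bar>t powr c * (t powr (-\<gamma>) - 1)\<bar> / \<bar>\<gamma>\<bar>"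
      using False t by (simp add: hfun_def abs_divide abs_mult)
    also have "t powr c * (t powr (-\<gamma>) - 1) = t powr (c - \<gamma>) - t powr c"
      by (simp add: right_diff_distrib flip: powr_add)
    finally have "t powr c * \<bar>hfun \<gamma> t\<bar> = \<bar>t powr (c - \<gamma>) - t powr c\<bar> / \<bar>\<gamma>\<bar>" .
    moreover have "t powr (c - \<gamma>) \<le> 1" "t powr c \<le> 1"
      using t assms by (auto intro: powr_le1)
    then have "\<bar>t powr (c - \<gamma>) - t powr c\<bar> \<le> 2"
      using powr_ge_zero[of t c] powr_ge_zero[of t "c - \<gamma>"] by (intro abs_leI) linarith+
    ultimately show ?thesis
      using False by (simp add: divide_right_mono)
  qed
  then show ?thesis
    by blast
qed

lemma powr_weighted_growth_le:
  fixes t K e \<epsilon> \<gamma> C w :: real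
  assumes t: "0 < t" "t \<le> 1" and K: "K > 0" and e: "0 < e" "e \<le> \<epsilon>"
    and w: "\<bar>w\<bar> \<le> C * sqrt K * t powr (1/2 - e)"
  shows "t powr (\<gamma> + 1/2 + \<epsilon>) * \<bar>t powr (-(\<gamma>+1)) * w / K\<bar> \<le> C / sqrt K"
proof -
  have "0 \<le> C * (sqrt K * t powr (1/2 - e))"
    using order_trans[OF abs_ge_zero w] by (simp add: mult.assoc)
  moreover have "sqrt K * t powr (1/2 - e) > 0"
    using K t by simp
  ultimately have "C \<ge> 0"
    by (simp add: zero_le_mult_iff)
  have "t powr (\<gamma> + 1/2 + \<epsilon>) * \<bar>t powr (-(\<gamma>+1)) * w / K\<bar> = t powr (\<epsilon> - 1/2) * \<bar>w\<bar> / K"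
    using K by (simp add: abs_mult abs_divide mult.assoc flip: powr_add)
  also have "\<dots> \<le> t powr (\<epsilon> - 1/2) * (C * sqrt K * t powr (1/2 - e)) / K"
    using w K by (intro divide_right_mono mult_left_mono) auto
  also have "\<dots> = C * (sqrt K / K) * (t powr (\<epsilon> - 1/2) * t powr (1/2 - e))"
    by (simp add: field_simps)
  also have "sqrt K / K = 1 / sqrt K"
    using K by (simp add: field_simps)
  also have "C * (1 / sqrt K) * (t powr (\<epsilon> - 1/2) * t powr (1/2 - e)) = C / sqrt K * t powr (\<epsilon> - e)"
    by (simp flip: powr_add)
  also have "\<dots> \<le> C / sqrt K"
    using \<open>C \<ge> 0\<close> K t e by (intro mult_left_le powr_le1) auto
  finally show ?thesis .
qed

lemma rescaled_increment_bound:
  fixes T s xt xe h wt we \<phi> \<psi>t \<psi>e B\<Phi> B\<Psi> CW :: real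
  assumes T: "0 \<le> T" "T \<le> 1" and s: "s > 0"
    and dt_bound: "T * \<bar>xt - (h - wt + \<phi> * \<psi>t)\<bar> \<le> 1/s + \<bar>\<phi>\<bar>"
    and de_bound: "\<bar>xe - (0 - we + \<phi> * \<psi>e)\<bar> \<le> 1/s + \<bar>\<phi>\<bar>"
    and \<phi>: "s * \<bar>\<phi>\<bar> \<le> B\<Phi>" and wt: "T * \<bar>wt\<bar> \<le> CW / s" and we: "\<bar>we\<bar> \<le> CW / s"
    and \<psi>t: "T * \<bar>\<psi>t\<bar> \<le> B\<Psi>"
  shows "\<bar>T * (s * (xt - xe - h))\<bar> \<le> 2 * (1 + B\<Phi>) + 2 * CW + B\<Phi> * (B\<Psi> + \<bar>\<psi>e\<bar>)"
proof -
  define dt where "dt = xt - (h - wt + \<phi> * \<psi>t)"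
  define de where "de = xe - (0 - we + \<phi> * \<psi>e)"
  have "0 \<le> s * \<bar>\<phi>\<bar>"
    using s by simp
  then have "B\<Phi> \<ge> 0"
    using \<phi> by linarith
  have "s * (1/s + \<bar>\<phi>\<bar>) \<le> 1 + B\<Phi>"
    using s \<phi> by (simp add: distrib_left)
  then have dt: "s * (T * \<bar>dt\<bar>) \<le> 1 + B\<Phi>" and de: "s * \<bar>de\<bar> \<le> 1 + B\<Phi>"
    using mult_left_mono[OF dt_bound, of s] mult_left_mono[OF de_bound, of s] s
    unfolding dt_def de_def by linarith+
  have wt': "s * (T * \<bar>wt\<bar>) \<le> CW" and we': "s * \<bar>we\<bar> \<le> CW"
    using mult_left_mono[OF wt, of s] mult_left_mono[OF we, of s] s by simp_all
  have \<psi>t': "(s * \<bar>\<phi>\<bar>) * (T * \<bar>\<psi>t\<bar>) \<le> B\<Phi> * B\<Psi>"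
    using \<phi> \<psi>t \<open>B\<Phi> \<ge> 0\<close> \<open>0 \<le> s * \<bar>\<phi>\<bar>\<close> T by (intro mult_mono) auto
  have \<psi>e': "(s * \<bar>\<phi>\<bar>) * \<bar>\<psi>e\<bar> \<le> B\<Phi> * \<bar>\<psi>e\<bar>"
    using \<phi> by (intro mult_right_mono) auto
  have "T * (xt - xe - h) = T * dt - T * de - T * wt + T * we + \<phi> * (T * \<psi>t) - \<phi> * (T * \<psi>e)"
    unfolding dt_def de_def by (simp add: algebra_simps)
  then have "\<bar>T * (s * (xt - xe - h))\<bar> = s * \<bar>T * dt - T * de - T * wt + T * we + \<phi> * (T * \<psi>t) - \<phi> * (T * \<psi>e)\<bar>"
    using s by (metis abs_mult abs_of_pos mult.left_commute)
  also have "\<dots> \<le> s * (T * \<bar>dt\<bar> + \<bar>de\<bar> + T * \<bar>wt\<bar> + \<bar>we\<bar> + \<bar>\<phi>\<bar> * (T * \<bar>\<psi>t\<bar>) + \<bar>\<phi>\<bar> * \<bar>\<psi>e\<bar>)"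
  proof (intro mult_left_mono)
    have tri: "\<bar>a - b - c + d + e - f\<bar> \<le> \<bar>a\<bar> + \<bar>b\<bar> + \<bar>c\<bar> + \<bar>d\<bar> + \<bar>e\<bar> + \<bar>f\<bar>" for a b c d e f :: real
      by linarith
    have "\<bar>T * de\<bar> \<le> \<bar>de\<bar>" "\<bar>T * we\<bar> \<le> \<bar>we\<bar>" "\<bar>\<phi> * (T * \<psi>e)\<bar> \<le> \<bar>\<phi>\<bar> * \<bar>\<psi>e\<bar>"
      using T by (auto simp: abs_mult mult_left_le_one_le mult_left_mono)
    moreover have "\<bar>T * dt\<bar> = T * \<bar>dt\<bar>" "\<bar>T * wt\<bar> = T * \<bar>wt\<bar>" "\<bar>\<phi> * (T * \<psi>t)\<bar> = \<bar>\<phi>\<bar> * (T * \<bar>\<psi>t\<bar>)"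
      using T by (auto simp: abs_mult)
    ultimately show "\<bar>T * dt - T * de - T * wt + T * we + \<phi> * (T * \<psi>t) - \<phi> * (T * \<psi>e)\<bar>
        \<le> T * \<bar>dt\<bar> + \<bar>de\<bar> + T * \<bar>wt\<bar> + \<bar>we\<bar> + \<bar>\<phi>\<bar> * (T * \<bar>\<psi>t\<bar>) + \<bar>\<phi>\<bar> * \<bar>\<psi>e\<bar>"
      using tri[of "T * dt" "T * de" "T * wt" "T * we" "\<phi> * (T * \<psi>t)" "\<phi> * (T * \<psi>e)"] by linarith
  qed (use s in simp)
  also have "\<dots> = s * (T * \<bar>dt\<bar>) + s * \<bar>de\<bar> + s * (T * \<bar>wt\<bar>) + s * \<bar>we\<bar>
                    + (s * \<bar>\<phi>\<bar>) * (T * \<bar>\<psi>t\<bar>) + (s * \<bar>\<phi>\<bar>) * \<bar>\<psi>e\<bar>"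
    by (simp add: algebra_simps)
  also have "\<dots> \<le> 2 * (1 + B\<Phi>) + 2 * CW + B\<Phi> * (B\<Psi> + \<bar>\<psi>e\<bar>)"
    using dt de wt' we' \<psi>t' \<psi>e' by (simp add: distrib_left)
  finally show ?thesis .
qed

lemma weighted_deviation_le:
  fixes T x p h w r H B :: real
  assumes "T \<ge> 0" "T * \<bar>x - (h - w + p)\<bar> \<le> r" "T * \<bar>h\<bar> \<le> H" "T * \<bar>w\<bar> \<le> B"
  shows "T * \<bar>x - p\<bar> \<le> r + H + B"
proof -
  have "\<bar>x - p\<bar> \<le> \<bar>x - (h - w + p)\<bar> + \<bar>h\<bar> + \<bar>w\<bar>"
    by linarith
  then have "T * \<bar>x - p\<bar> \<le> T * \<bar>x - (h - w + p)\<bar> + T * \<bar>h\<bar> + T * \<bar>w\<bar>"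
    using assms(1) by (metis distrib_left mult_left_mono)
  then show ?thesis
    using assms(2-4) by linarith
qed

section \<open>Growth of Brownian motion near the origin\<close>

lemma brownian_increment_tail:
  assumes "prob_space M" "std_brownian_motion M W" "0 \<le> s" "s < u" "x > 0" "p > 0"
  shows "measure M {\<omega>\<in>space M. \<bar>W u \<omega> - W s \<omega>\<bar> \<ge> x} \<le> fact (2*p) * (u - s)^p / x^(2*p)"
proof -
  interpret prob_space M by fact
  define \<sigma> where "\<sigma> = sqrt (u - s)"
  have \<sigma>: "\<sigma> > 0"
    using assms(4) by (simp add: \<sigma>_def)
  have D: "distributed M lborel (\<lambda>\<omega>. W u \<omega> - W s \<omega>) (\<lambda>x. ennreal (normal_density 0 \<sigma> x))"
    using assms(2-4) unfolding std_brownian_motion_def \<sigma>_def by blast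
  have "integrable lborel (\<lambda>x. normal_density 0 \<sigma> x * x ^ (2*p))"
    using integrable_normal_moment[of \<sigma> 0 "2*p"] \<sigma> by simp
  then have int: "integrable M (\<lambda>\<omega>. (W u \<omega> - W s \<omega>) ^ (2*p))"
    using distributed_integrable[OF D, of "\<lambda>x. x ^ (2*p)"] by simp
  have "(\<integral>\<omega>. (W u \<omega> - W s \<omega>) ^ (2*p) \<partial>M) = (\<integral>x. normal_density 0 \<sigma> x * x ^ (2*p) \<partial>lborel)"
    using distributed_integral[OF D, of "\<lambda>x. x ^ (2*p)"] by simp
  also have "\<dots> = fact (2*p) * (u - s)^p / (2^p * fact p)"
    using integral_normal_moment_even[OF \<sigma>, of 0 p] \<sigma> assms(4)
    by (simp add: \<sigma>_def power_divide)
  also have "\<dots> \<le> fact (2*p) * (u - s)^p"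
  proof -
    have "(1::real) \<le> 2^p * fact p"
      using mult_mono[OF one_le_power[of 2 p] fact_ge_1[of p]] by simp
    moreover have "0 \<le> fact (2*p) * (u - s)^p"
      using assms(4) by simp
    ultimately show ?thesis
      by (simp add: divide_le_eq mult_le_cancel_left1)
  qed
  finally have moment: "(\<integral>\<omega>. (W u \<omega> - W s \<omega>) ^ (2*p) \<partial>M) \<le> fact (2*p) * (u - s)^p" .
  have "{\<omega>\<in>space M. \<bar>W u \<omega> - W s \<omega>\<bar> \<ge> x} = {\<omega>\<in>space M. x^(2*p) \<le> (W u \<omega> - W s \<omega>) ^ (2*p)}"
  proof -
    have "\<bar>z\<bar> \<ge> x \<longleftrightarrow> x^(2*p) \<le> z^(2*p)" for z :: real
      using power_mono_iff[of x "\<bar>z\<bar>" "2*p"] power_even_abs[of "2*p" z] assms(5,6) by simp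
    then show ?thesis
      by simp
  qed
  also have "measure M \<dots> \<le> (\<integral>\<omega>. (W u \<omega> - W s \<omega>) ^ (2*p) \<partial>M) / x^(2*p)"
    using assms(5) by (intro integral_Markov_inequality_measure[OF int]) (auto simp: power_mult)
  also have "\<dots> \<le> fact (2*p) * (u - s)^p / x^(2*p)"
    using moment assms(5) by (simp add: divide_right_mono)
  finally show ?thesis .
qed

lemma (in prob_space) prob_UN_le_geometric:
  assumes "range B \<subseteq> events" "\<And>l. prob (B l) \<le> q * (1/2)^l"
  shows "prob (\<Union>l. B l) \<le> 2 * q"
proof -
  have summable: "summable (\<lambda>l. q * (1/2::real)^l)"
    by (intro summable_mult summable_geometric) simp
  then have "summable (\<lambda>l. prob (B l))"
    by (rule summable_comparison_test'[where N=0]) (use assms(2) in auto)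
  then have "prob (\<Union>l. B l) \<le> (\<Sum>l. prob (B l))"
    using assms(1) by (intro finite_measure_subadditive_countably) auto
  also have "\<dots> \<le> (\<Sum>l. q * (1/2::real)^l)"
    using assms(2) \<open>summable (\<lambda>l. prob (B l))\<close> summable by (rule suminf_le)
  also have "\<dots> = 2 * q"
    using suminf_mult[OF summable_geometric[of "1/2::real"], of q] suminf_geometric[of "1/2::real"]
    by simp
  finally show ?thesis .
qed

lemma small_quotient_by_power:
  fixes F \<delta> :: real
  assumes "F > 0" "\<delta> > 0" "n > 0"
  obtains C where "C \<ge> 1" "2 * (F / C^n) < \<delta>"
proof
  define C where "C = 4 * F / \<delta> + 1"
  show "C \<ge> 1"
    using assms by (simp add: C_def)
  have "\<delta> * C = 4 * F + \<delta>"
    using assms by (simp add: C_def field_simps)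
  then have "2 * (F / C) < \<delta>"
    using \<open>C \<ge> 1\<close> assms by (simp add: field_simps)
  moreover have "2 * (F / C^n) \<le> 2 * (F / C)"
    using \<open>C \<ge> 1\<close> assms by (intro mult_left_mono divide_left_mono) (auto intro: power_increasing[of 1 n C, simplified])
  ultimately show "2 * (F / C^n) < \<delta>"
    by linarith
qed

lemma (in prob_space) brownian_dyadic_level:
  fixes l :: nat
  assumes W: "std_brownian_motion M W" and K: "K > 0" and C: "C \<ge> 1" and p: "2 \<le> real p * (1 - 2*\<beta>)"
  defines "B \<equiv> \<Union>i<2^l. {\<omega>\<in>space M.
             C * sqrt K * ((1/2)^l) powr \<beta> \<le> \<bar>W (K * (real (i+1) / 2^l)) \<omega> - W (K * (real i / 2^l)) \<omega>\<bar>}"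
  shows "B \<in> events" and "prob B \<le> fact (2*p) / C^(2*p) * (1/2)^l"
    and "\<omega> \<in> space M - B \<Longrightarrow> i < 2^l \<Longrightarrow>
           \<bar>W (K * (real (i+1) / 2^l)) \<omega> - W (K * (real i / 2^l)) \<omega>\<bar> \<le> C * sqrt K * ((1/2)^l) powr \<beta>"
proof -
  show "\<omega> \<in> space M - B \<Longrightarrow> i < 2^l \<Longrightarrow>
      \<bar>W (K * (real (i+1) / 2^l)) \<omega> - W (K * (real i / 2^l)) \<omega>\<bar> \<le> C * sqrt K * ((1/2)^l) powr \<beta>"
    unfolding B_def by (auto simp: not_le intro: less_imp_le)
  define bad where "bad i = {\<omega>\<in>space M.
      C * sqrt K * ((1/2)^l) powr \<beta> \<le> \<bar>W (K * (real (i+1) / 2^l)) \<omega> - W (K * (real i / 2^l)) \<omega>\<bar>}" for i :: nat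
  define q where "q = fact (2*p) / C^(2*p)"
  have "p > 0"
    using p by (cases p) auto
  have bad_sets: "bad i \<in> events" for i
  proof -
    have [measurable]: "W (K * (real (i+1) / 2^l)) \<in> borel_measurable M" "W (K * (real i / 2^l)) \<in> borel_measurable M"
      using W K unfolding std_brownian_motion_def by auto
    show ?thesis
      unfolding bad_def by measurable
  qed
  then show "B \<in> events"
    unfolding B_def bad_def[symmetric] by auto
  have bad_prob: "prob (bad i) \<le> q * ((1/2)^l)^2" for i
  proof -
    have "0 \<le> K * (real i / 2^l)" "K * (real i / 2^l) < K * (real (i+1) / 2^l)"
      using K by (auto simp: field_simps)
    then have "prob (bad i) \<le> fact (2*p) * (K * (real (i+1) / 2^l) - K * (real i / 2^l))^p
                                 / (C * sqrt K * ((1/2)^l) powr \<beta>)^(2*p)"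
      unfolding bad_def using K C \<open>p > 0\<close> by (intro brownian_increment_tail[OF prob_space_axioms W]) auto
    also have "\<dots> = q * ((K * (1/2)^l)^p / (sqrt K * ((1/2)^l) powr \<beta>)^(2*p))"
      unfolding q_def by (simp add: field_simps power_mult_distrib)
    also have "\<dots> \<le> q * ((1/2)^l)^2"
      using K p C by (intro mult_left_mono scaled_moment_ratio_le) (auto simp: q_def power_le_one)
    finally show ?thesis .
  qed
  have "prob B \<le> (\<Sum>i<2^l. prob (bad i))"
    unfolding B_def bad_def[symmetric] using bad_sets by (intro measure_UNION_le) auto
  also have "\<dots> \<le> (\<Sum>i<(2::nat)^l. q * ((1/2)^l)^2)"
    by (intro sum_mono bad_prob)
  also have "\<dots> = q * (1/2)^l"
    by (simp add: power2_eq_square power_one_over)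
  finally show "prob B \<le> fact (2*p) / C^(2*p) * (1/2)^l"
    unfolding q_def .
qed

lemma brownian_dyadic_increments:
  assumes M: "prob_space M" and W: "std_brownian_motion M W" and \<beta>: "\<beta> < 1/2" and \<delta>: "\<delta> > 0"
  shows "\<exists>C>0. \<forall>K>0. holds_except M \<delta> (\<lambda>\<omega>. \<forall>l. \<forall>i<2^l.
           \<bar>W (K * (real (i+1) / 2^l)) \<omega> - W (K * (real i / 2^l)) \<omega>\<bar> \<le> C * sqrt K * ((1/2)^l) powr \<beta>)"
proof -
  interpret prob_space M by fact
  define p where "p = nat \<lceil>2 / (1 - 2*\<beta>)\<rceil>"
  have "2 / (1 - 2*\<beta>) \<le> real p"
    unfolding p_def by (rule real_nat_ceiling_ge)
  then have p: "2 \<le> real p * (1 - 2*\<beta>)"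
    using \<beta> by (simp add: pos_divide_le_eq)
  then have "p > 0"
    by (cases p) auto
  define F :: real where "F = fact (2*p)"
  obtain C where "C \<ge> 1" and small: "2 * (F / C^(2*p)) < \<delta>"
    using small_quotient_by_power[of F \<delta> "2*p"] \<delta> \<open>p > 0\<close> by (auto simp: F_def)
  show ?thesis
  proof (intro exI[of _ C] conjI allI impI)
    fix K :: real
    assume K: "K > 0"
    define B where "B l = (\<Union>i<2^l. {\<omega>\<in>space M.
      C * sqrt K * ((1/2)^l) powr \<beta> \<le> \<bar>W (K * (real (i+1) / 2^l)) \<omega> - W (K * (real i / 2^l)) \<omega>\<bar>})" for l
    have B: "B l \<in> events" "prob (B l) \<le> F / C^(2*p) * (1/2)^l"
      "\<omega> \<in> space M - B l \<Longrightarrow> i < 2^l \<Longrightarrow>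
         \<bar>W (K * (real (i+1) / 2^l)) \<omega> - W (K * (real i / 2^l)) \<omega>\<bar> \<le> C * sqrt K * ((1/2)^l) powr \<beta>"
      for l i \<omega>
      unfolding B_def F_def by (rule brownian_dyadic_level[OF W K \<open>C \<ge> 1\<close> p]; assumption)+
    then have "prob (\<Union>l. B l) \<le> 2 * (F / C^(2*p))"
      by (intro prob_UN_le_geometric) auto
    then have "prob (\<Union>l. B l) < \<delta>"
      using small by linarith
    then show "holds_except M \<delta> (\<lambda>\<omega>. \<forall>l. \<forall>i<2^l.
           \<bar>W (K * (real (i+1) / 2^l)) \<omega> - W (K * (real i / 2^l)) \<omega>\<bar> \<le> C * sqrt K * ((1/2)^l) powr \<beta>)"
      using B(1,3) by (intro holds_exceptI[of "\<Union>l. B l"]) blast+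
  qed (use \<open>C \<ge> 1\<close> in auto)
qed

lemma brownian_growth_bound:
  assumes M: "prob_space M" and W: "std_brownian_motion M W" and e: "0 < e" "e < 1/2" and \<delta>: "\<delta> > 0"
  shows "\<exists>C. \<forall>K>0. holds_except M \<delta> (\<lambda>\<omega>. \<forall>t\<in>{0<..1}. \<bar>W (K*t) \<omega>\<bar> \<le> C * sqrt K * t powr (1/2 - e))"
proof -
  obtain C where C: "C > 0" and increments: "\<And>K. K > 0 \<Longrightarrow> holds_except M (\<delta>/2) (\<lambda>\<omega>. \<forall>l. \<forall>i<2^l.
      \<bar>W (K * (real (i+1) / 2^l)) \<omega> - W (K * (real i / 2^l)) \<omega>\<bar> \<le> C * sqrt K * ((1/2)^l) powr (1/2 - e/2))"
    using brownian_dyadic_increments[OF M W, of "1/2 - e/2" "\<delta>/2"] e \<delta> by auto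
  have "AE \<omega> in M. W 0 \<omega> = 0 \<and> continuous_on {0..} (\<lambda>t. W t \<omega>)"
    using W unfolding std_brownian_motion_def by auto
  then have paths: "holds_except M (\<delta>/2) (\<lambda>\<omega>. W 0 \<omega> = 0 \<and> continuous_on {0..} (\<lambda>t. W t \<omega>))"
    using \<delta> by (intro holds_except_AE) auto
  show ?thesis
  proof (intro exI allI impI)
    fix K :: real
    assume K: "K > 0"
    show "holds_except M \<delta> (\<lambda>\<omega>. \<forall>t\<in>{0<..1}.
            \<bar>W (K*t) \<omega>\<bar> \<le> C / (1 - (1/2) powr (e/2)) * sqrt K * t powr (1/2 - e))"
    proof (rule holds_except_mono[OF holds_except_conj[OF increments[OF K] paths]], safe)
      fix \<omega> and t :: real
      assume inc: "\<forall>l. \<forall>i<2^l. \<bar>W (K * (real (i+1) / 2^l)) \<omega> - W (K * (real i / 2^l)) \<omega>\<bar>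
                      \<le> C * sqrt K * ((1/2)^l) powr (1/2 - e/2)"
        and W0: "W 0 \<omega> = 0" and cont: "continuous_on {0..} (\<lambda>t. W t \<omega>)" and t: "t \<in> {0<..1}"
      have "continuous_on {0..1} (\<lambda>u. W (K*u) \<omega>)"
        using K by (intro continuous_on_compose2[OF cont] continuous_intros) auto
      then have "\<bar>W (K*t) \<omega>\<bar> \<le> C * sqrt K / (1 - (1/2) powr (e/2)) * t powr (1/2 - e/2 - e/2)"
        using W0 inc C K e t by (intro powr_bound_of_dyadic_increments[where g="\<lambda>u. W (K*u) \<omega>"]) auto
      then show "\<bar>W (K*t) \<omega>\<bar> \<le> C / (1 - (1/2) powr (e/2)) * sqrt K * t powr (1/2 - e)"
        by simp
    qed simp
  qed
qed

lemma brownian_weighted_bound: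
  assumes M: "prob_space M" and W: "std_brownian_motion M W" and \<epsilon>: "\<epsilon> > 0" and \<delta>: "\<delta> > 0"
  shows "\<exists>C. \<forall>K>0. holds_except M \<delta> (\<lambda>\<omega>. \<forall>t\<in>{0<..1}.
           t powr (\<gamma> + 1/2 + \<epsilon>) * \<bar>t powr (-(\<gamma>+1)) * W (K*t) \<omega> / K\<bar> \<le> C / sqrt K)"
proof -
  define e where "e = min \<epsilon> (1/4)"
  have e: "0 < e" "e < 1/2" "e \<le> \<epsilon>"
    using \<epsilon> by (auto simp: e_def)
  obtain C where C: "\<And>K. K > 0 \<Longrightarrow> holds_except M \<delta>
      (\<lambda>\<omega>. \<forall>t\<in>{0<..1}. \<bar>W (K*t) \<omega>\<bar> \<le> C * sqrt K * t powr (1/2 - e))"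
    using brownian_growth_bound[OF M W e(1,2) \<delta>] by blast
  show ?thesis
  proof (intro exI[of _ C] allI impI)
    fix K :: real
    assume K: "K > 0"
    show "holds_except M \<delta> (\<lambda>\<omega>. \<forall>t\<in>{0<..1}.
            t powr (\<gamma> + 1/2 + \<epsilon>) * \<bar>t powr (-(\<gamma>+1)) * W (K*t) \<omega> / K\<bar> \<le> C / sqrt K)"
    proof (rule holds_except_mono[OF C[OF K] order_refl], intro ballI)
      fix \<omega> and t :: real
      assume "\<forall>t\<in>{0<..1}. \<bar>W (K*t) \<omega>\<bar> \<le> C * sqrt K * t powr (1/2 - e)" "t \<in> {0<..1}"
      then show "t powr (\<gamma> + 1/2 + \<epsilon>) * \<bar>t powr (-(\<gamma>+1)) * W (K*t) \<omega> / K\<bar> \<le> C / sqrt K"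
        using e K by (intro powr_weighted_growth_le) auto
    qed
  qed
qed

section \<open>Monotonicity of the tail quantile process\<close>

lemma AE_le_of_distr_eq:
  fixes Q :: "real \<Rightarrow> 'a \<Rightarrow> real" and Y :: "real \<Rightarrow> 'b \<Rightarrow> real"
  assumes Q_meas: "\<And>t. Q t \<in> borel_measurable M"
    and distr_eq: "distr M (PiM {s,u} (\<lambda>_. borel)) (\<lambda>\<omega>. \<lambda>t\<in>{s,u}. Q t \<omega>) =
                   distr P (PiM {s,u} (\<lambda>_. borel)) (\<lambda>\<omega>. \<lambda>t\<in>{s,u}. Y t \<omega>)"
    and Y_le: "\<And>\<omega>. \<omega> \<in> space P \<Longrightarrow> Y u \<omega> \<le> Y s \<omega>"
  shows "AE \<omega> in M. Q u \<omega> \<le> Q s \<omega>"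
proof -
  define N where "N = PiM {s,u} (\<lambda>_. borel :: real measure)"
  define f where "f = (\<lambda>\<omega>. \<lambda>t\<in>{s,u}. Q t \<omega>)"
  define g where "g = (\<lambda>\<omega>. \<lambda>t\<in>{s,u}. Y t \<omega>)"
  define S where "S = {x\<in>space N. x s < x u}"
  have f_meas: "f \<in> measurable M N"
    unfolding f_def N_def using Q_meas by (intro measurable_restrict) auto
  have S_sets: "S \<in> sets N"
    unfolding S_def N_def by (intro borel_measurable_less measurable_component_singleton) auto
  \<comment> \<open>\<open>g\<close> need not be measurable; still \<open>g -` S\<close> is empty, so \<open>S\<close> is null for
    \<open>distr P N g\<close> in both branches of \<open>measure_of\<close>\<close>
  have "g -` S \<inter> space P = {}"
    using Y_le unfolding S_def g_def by (auto simp: not_less[symmetric])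
  then have "emeasure (distr P N g) S = 0"
    by (simp add: distr_def emeasure_measure_of_conv)
  then have "emeasure (distr M N f) S = 0"
    using distr_eq by (simp add: N_def f_def g_def)
  then have "f -` S \<inter> space M \<in> null_sets M"
    by (intro null_setsI measurable_sets[OF f_meas S_sets]) (simp add: emeasure_distr[OF f_meas S_sets])
  moreover have "f -` S \<inter> space M = {\<omega>\<in>space M. \<not> Q u \<omega> \<le> Q s \<omega>}"
    using measurable_space[OF f_meas] unfolding S_def f_def by (auto simp: not_le)
  ultimately show ?thesis
    by (intro AE_I'[of "f -` S \<inter> space M"]) auto
qed

lemma order_stat_mono:
  assumes "i \<le> j" "j \<le> n" "n \<ge> 1"
  shows "order_stat X n i \<omega> \<le> order_stat X n j \<omega>"
  unfolding order_stat_def using assms by (intro sorted_nth_mono[OF sorted_sort]) auto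

lemma order_stat_process_mono:
  fixes Q :: "real \<Rightarrow> 'a \<Rightarrow> real" and X :: "nat \<Rightarrow> 'b \<Rightarrow> real"
  assumes Q_meas: "\<And>t. Q t \<in> borel_measurable M"
    and Q_distr: "\<And>J. finite J \<Longrightarrow> J \<subseteq> {0..1} \<Longrightarrow>
       distr M (PiM J (\<lambda>_. borel)) (\<lambda>\<omega>. \<lambda>t\<in>J. Q t \<omega>) =
       distr P (PiM J (\<lambda>_. borel)) (\<lambda>\<omega>. \<lambda>t\<in>J. order_stat X n (n - nat \<lfloor>real k * t\<rfloor>) \<omega>)"
    and n: "n \<ge> 1" and t: "t \<in> {0..1}"
  shows "AE \<omega> in M. Q 1 \<omega> \<le> Q t \<omega> \<and> Q t \<omega> \<le> Q 0 \<omega>"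
proof -
  have "\<lfloor>real k * t\<rfloor> \<le> \<lfloor>real k\<rfloor>"
    using t by (intro floor_mono) (simp add: mult_left_le)
  then have "nat \<lfloor>real k * t\<rfloor> \<le> k"
    by simp
  have "AE \<omega> in M. Q 1 \<omega> \<le> Q t \<omega>"
  proof (rule AE_le_of_distr_eq[OF Q_meas Q_distr])
    show "finite {t, 1}" "{t, 1} \<subseteq> {0..1}"
      using t by auto
    show "order_stat X n (n - nat \<lfloor>real k * 1\<rfloor>) \<omega> \<le> order_stat X n (n - nat \<lfloor>real k * t\<rfloor>) \<omega>" for \<omega>
      using \<open>nat \<lfloor>real k * t\<rfloor> \<le> k\<close> n by (intro order_stat_mono) simp_all
  qed
  moreover have "AE \<omega> in M. Q t \<omega> \<le> Q 0 \<omega>"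
  proof (rule AE_le_of_distr_eq[OF Q_meas Q_distr])
    show "finite {0, t}" "{0, t} \<subseteq> {0..1}"
      using t by auto
    show "order_stat X n (n - nat \<lfloor>real k * t\<rfloor>) \<omega> \<le> order_stat X n (n - nat \<lfloor>real k * 0\<rfloor>) \<omega>" for \<omega>
      using n by (intro order_stat_mono) simp_all
  qed
  ultimately show ?thesis
    by (rule AE_conjI)
qed

lemma eventually_order_stat_process_mono:
  fixes Q :: "nat \<Rightarrow> real \<Rightarrow> 'a \<Rightarrow> real" and X :: "nat \<Rightarrow> 'b \<Rightarrow> real"
  assumes Q_meas: "\<And>n t. Q n t \<in> borel_measurable M"
    and Q_distr: "\<And>n J. finite J \<Longrightarrow> J \<subseteq> {0..1} \<Longrightarrow>
       distr M (PiM J (\<lambda>_. borel)) (\<lambda>\<omega>. \<lambda>t\<in>J. Q n t \<omega>) =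
       distr P (PiM J (\<lambda>_. borel)) (\<lambda>\<omega>. \<lambda>t\<in>J. order_stat X n (n - nat \<lfloor>real (k n) * t\<rfloor>) \<omega>)"
  shows "\<forall>\<^sub>F n in sequentially. \<forall>t\<in>{0..1}. AE \<omega> in M. Q n 1 \<omega> \<le> Q n t \<omega> \<and> Q n t \<omega> \<le> Q n 0 \<omega>"
proof (rule eventually_mono[OF eventually_ge_at_top[of 1]], intro ballI)
  fix n :: nat and t :: real
  assume "n \<ge> 1" "t \<in> {0..1}"
  then show "AE \<omega> in M. Q n 1 \<omega> \<le> Q n t \<omega> \<and> Q n t \<omega> \<le> Q n 0 \<omega>"
    by (intro order_stat_process_mono[where Q="Q n" and k="k n", OF Q_meas Q_distr]) simp_all
qed

lemma (in prob_space) bounded_drift_of_monotone_process: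
  fixes Q :: "real \<Rightarrow> 'a \<Rightarrow> real" and \<psi> :: "real \<Rightarrow> real"
  assumes Q_meas: "\<And>t. Q t \<in> borel_measurable M"
    and Q_mono: "\<And>t. t \<in> {0<..1} \<Longrightarrow> AE \<omega> in M. Q 1 \<omega> \<le> Q t \<omega> \<and> Q t \<omega> \<le> Q 0 \<omega>"
    and tracks: "holds_except M (1/2) (\<lambda>\<omega>. \<forall>t\<in>{0<..1}. t powr c * \<bar>(Q t \<omega> - b) / a - \<psi> t\<bar> \<le> B)"
    and c: "c \<ge> 0"
  shows "\<exists>B'. \<forall>t\<in>{0<..1}. t powr c * \<bar>\<psi> t\<bar> \<le> B'"
proof -
  obtain z0 where z0: "holds_except M (1/8) (\<lambda>\<omega>. \<bar>Q 0 \<omega>\<bar> \<le> z0)"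
    using holds_except_abs_bounded[OF Q_meas, of "1/8" 0] by auto
  obtain z1 where z1: "holds_except M (1/8) (\<lambda>\<omega>. \<bar>Q 1 \<omega>\<bar> \<le> z1)"
    using holds_except_abs_bounded[OF Q_meas, of "1/8" 1] by auto
  have "t powr c * \<bar>\<psi> t\<bar> \<le> B + (max z0 z1 + \<bar>b\<bar>) / \<bar>a\<bar>" if t: "t \<in> {0<..1}" for t
  proof -
    have "holds_except M (1/8) (\<lambda>\<omega>. Q 1 \<omega> \<le> Q t \<omega> \<and> Q t \<omega> \<le> Q 0 \<omega>)"
      using Q_mono[OF t] by (rule holds_except_AE) simp
    with tracks z0 z1 have "holds_except M (1/2 + 1/8 + 1/8 + 1/8) (\<lambda>\<omega>.
        (((\<forall>t\<in>{0<..1}. t powr c * \<bar>(Q t \<omega> - b) / a - \<psi> t\<bar> \<le> B) \<and> \<bar>Q 0 \<omega>\<bar> \<le> z0)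
          \<and> \<bar>Q 1 \<omega>\<bar> \<le> z1) \<and> Q 1 \<omega> \<le> Q t \<omega> \<and> Q t \<omega> \<le> Q 0 \<omega>)"
      by (intro holds_except_conj)
    \<comment> \<open>the four exceptional events have total probability below 1\<close>
    then obtain \<omega> where \<omega>: "\<forall>t\<in>{0<..1}. t powr c * \<bar>(Q t \<omega> - b) / a - \<psi> t\<bar> \<le> B"
        "\<bar>Q 0 \<omega>\<bar> \<le> z0" "\<bar>Q 1 \<omega>\<bar> \<le> z1" "Q 1 \<omega> \<le> Q t \<omega>" "Q t \<omega> \<le> Q 0 \<omega>"
      by (elim holds_except_witness) auto
    have "t powr c \<le> 1"
      using t c by (intro powr_le1) auto
    have "t powr c * \<bar>(Q t \<omega> - b) / a\<bar> \<le> \<bar>(Q t \<omega> - b) / a\<bar>"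
      using \<open>t powr c \<le> 1\<close> by (intro mult_left_le_one_le) auto
    also have "\<dots> \<le> (max z0 z1 + \<bar>b\<bar>) / \<bar>a\<bar>"
      unfolding abs_divide using \<omega>(2-5) by (intro divide_right_mono) auto
    finally have "t powr c * \<bar>(Q t \<omega> - b) / a\<bar> \<le> (max z0 z1 + \<bar>b\<bar>) / \<bar>a\<bar>" .
    moreover have "\<bar>\<psi> t\<bar> \<le> \<bar>(Q t \<omega> - b) / a\<bar> + \<bar>(Q t \<omega> - b) / a - \<psi> t\<bar>"
      using abs_triangle_ineq4[of "(Q t \<omega> - b) / a" "(Q t \<omega> - b) / a - \<psi> t"] by simp
    then have "t powr c * \<bar>\<psi> t\<bar> \<le> t powr c * \<bar>(Q t \<omega> - b) / a\<bar> + t powr c * \<bar>(Q t \<omega> - b) / a - \<psi> t\<bar>"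
      unfolding distrib_left[symmetric] by (rule mult_left_mono) simp
    ultimately show ?thesis
      using \<omega>(1) t by fastforce
  qed
  then show ?thesis
    by blast
qed

section \<open>The strong approximation\<close>

lemma eventually_ratio_in_unit_interval:
  assumes "filterlim k at_top sequentially" "(\<lambda>n. real (k n) / real n) \<longlonglongrightarrow> 0"
  shows "\<forall>\<^sub>F n in sequentially. real (k n) / real n \<in> {0<..<1}"
proof -
  have "\<forall>\<^sub>F n in sequentially. k n \<ge> 1"
    using assms(1) by (simp add: filterlim_at_top)
  moreover have "\<forall>\<^sub>F n in sequentially. real (k n) / real n < 1"
    using assms(2) by (rule order_tendstoD) simp
  moreover have "\<forall>\<^sub>F n in sequentially. n \<ge> 1"
    by (rule eventually_ge_at_top)
  ultimately show ?thesis
    by eventually_elim (simp add: zero_less_divide_iff)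
qed

lemma sqrt_mult_bounded_of_bigo:
  fixes f :: "nat \<Rightarrow> real"
  assumes "f \<in> O(\<lambda>n. 1 / sqrt (real (k n)))"
  shows "\<exists>B. \<forall>\<^sub>F n in sequentially. sqrt (real (k n)) * \<bar>f n\<bar> \<le> B"
proof -
  obtain B where B: "B > 0" "\<forall>\<^sub>F n in sequentially. norm (f n) \<le> B * norm (1 / sqrt (real (k n)))"
    using assms by (rule landau_o.bigE)
  have "\<forall>\<^sub>F n in sequentially. sqrt (real (k n)) * \<bar>f n\<bar> \<le> B"
  proof (rule eventually_mono[OF B(2)])
    fix n
    assume bound: "norm (f n) \<le> B * norm (1 / sqrt (real (k n)))"
    show "sqrt (real (k n)) * \<bar>f n\<bar> \<le> B"
    proof (cases "k n = 0")
      case False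
      then have "sqrt (real (k n)) * \<bar>f n\<bar> \<le> sqrt (real (k n)) * (B * (1 / sqrt (real (k n))))"
        using bound by (intro mult_left_mono) auto
      then show ?thesis
        using False by simp
    qed (use B(1) in simp)
  qed
  then show ?thesis
    by blast
qed

text \<open>The parameters \<open>a\<close>, \<open>b\<close> and \<open>\<phi>\<close> stand for the sequences \<open>\<tilde>a(k/n)\<close>,
  \<open>F\<^sup>\<leftarrow>(1 - k/n)\<close> and \<open>\<tilde>\<Phi>(k/n)\<close>.\<close>

locale tail_quantile_approximation = prob_space M
  for M :: "'a measure" +
  fixes W :: "real \<Rightarrow> 'a \<Rightarrow> real" and Q :: "nat \<Rightarrow> real \<Rightarrow> 'a \<Rightarrow> real" and k :: "nat \<Rightarrow> nat"
    and a b \<phi> :: "nat \<Rightarrow> real" and \<Psi> :: "real \<Rightarrow> real" and \<gamma> \<epsilon> :: real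
  assumes brownian: "std_brownian_motion M W"
    and Q_meas: "\<And>n t. Q n t \<in> borel_measurable M"
    and Q_mono: "\<forall>\<^sub>F n in sequentially. \<forall>t\<in>{0..1}. AE \<omega> in M. Q n 1 \<omega> \<le> Q n t \<omega> \<and> Q n t \<omega> \<le> Q n 0 \<omega>"
    and k_top: "filterlim k at_top sequentially"
    and \<gamma>: "\<gamma> > -1/2" and \<epsilon>: "\<epsilon> > 0"
    and \<phi>_nonzero: "\<forall>\<^sub>F n in sequentially. \<phi> n \<noteq> 0"
    and approx: "sup_op M
       (\<lambda>n t \<omega>. t powr (\<gamma> + 1/2 + \<epsilon>) *
          ((Q n t \<omega> - b n) / a n
           - (hfun \<gamma> t - t powr (- (\<gamma> + 1)) * W (real (k n) * t) \<omega> / real (k n) + \<phi> n * \<Psi> t)))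
       (\<lambda>n. 1 / sqrt (real (k n)) + \<bar>\<phi> n\<bar>)"
begin

abbreviation \<kappa> :: real where "\<kappa> \<equiv> \<gamma> + 1/2 + \<epsilon>"

definition remainder :: "nat \<Rightarrow> real \<Rightarrow> 'a \<Rightarrow> real" where
  "remainder n t \<omega> = (Q n t \<omega> - b n) / a n
     - (hfun \<gamma> t - t powr (- (\<gamma> + 1)) * W (real (k n) * t) \<omega> / real (k n) + \<phi> n * \<Psi> t)"

lemma \<kappa>_pos: "\<kappa> > 0"
  using \<gamma> \<epsilon> by simp

lemma remainder_small:
  assumes "\<delta> > 0"
  shows "\<forall>\<^sub>F n in sequentially. holds_except M \<delta> (\<lambda>\<omega>. \<forall>t\<in>{0<..1}.
           t powr \<kappa> * \<bar>remainder n t \<omega>\<bar> \<le> 1 / sqrt (real (k n)) + \<bar>\<phi> n\<bar>)"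
  using sup_op_holds_except[OF approx assms] by (simp add: remainder_def abs_mult)

lemma brownian_term_small:
  assumes "\<delta> > 0"
  obtains CW where "\<And>K. K > 0 \<Longrightarrow> holds_except M \<delta> (\<lambda>\<omega>. \<forall>t\<in>{0<..1}.
      t powr \<kappa> * \<bar>t powr (-(\<gamma>+1)) * W (K*t) \<omega> / K\<bar> \<le> CW / sqrt K)"
  using brownian_weighted_bound[OF prob_space_axioms brownian \<epsilon> assms, of \<gamma>] by blast

lemma k_ge_1: "\<forall>\<^sub>F n in sequentially. k n \<ge> 1"
  using k_top by (simp add: filterlim_at_top)

lemma weighted_Psi_bounded: "\<exists>B. \<forall>t\<in>{0<..1}. t powr \<kappa> * \<bar>\<Psi> t\<bar> \<le> B"
proof -
  \<comment> \<open>\<open>\<Psi>\<close> does not depend on \<open>n\<close>, so a single good index \<open>n\<close> suffices\<close>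
  obtain H where H: "\<forall>t\<in>{0<..1}. t powr \<kappa> * \<bar>hfun \<gamma> t\<bar> \<le> H"
    using hfun_powr_bounded[of \<kappa> \<gamma>] \<kappa>_pos \<epsilon> by auto
  obtain CW where CW: "\<And>K. K > 0 \<Longrightarrow> holds_except M (1/4) (\<lambda>\<omega>. \<forall>t\<in>{0<..1}.
      t powr \<kappa> * \<bar>t powr (-(\<gamma>+1)) * W (K*t) \<omega> / K\<bar> \<le> CW / sqrt K)"
    using brownian_term_small[of "1/4"] by auto
  have "\<forall>\<^sub>F n in sequentially. holds_except M (1/4) (\<lambda>\<omega>. \<forall>t\<in>{0<..1}.
           t powr \<kappa> * \<bar>remainder n t \<omega>\<bar> \<le> 1 / sqrt (real (k n)) + \<bar>\<phi> n\<bar>)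
         \<and> (\<forall>t\<in>{0..1}. AE \<omega> in M. Q n 1 \<omega> \<le> Q n t \<omega> \<and> Q n t \<omega> \<le> Q n 0 \<omega>) \<and> \<phi> n \<noteq> 0 \<and> k n \<ge> 1"
    using remainder_small[of "1/4"] Q_mono \<phi>_nonzero k_ge_1 by (intro eventually_conj) simp_all
  then obtain n where remainder_n: "holds_except M (1/4) (\<lambda>\<omega>. \<forall>t\<in>{0<..1}.
           t powr \<kappa> * \<bar>remainder n t \<omega>\<bar> \<le> 1 / sqrt (real (k n)) + \<bar>\<phi> n\<bar>)"
      and mono_n: "\<forall>t\<in>{0..1}. AE \<omega> in M. Q n 1 \<omega> \<le> Q n t \<omega> \<and> Q n t \<omega> \<le> Q n 0 \<omega>"
      and "\<phi> n \<noteq> 0" "k n \<ge> 1"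
    using eventually_happens'[OF sequentially_bot] by blast
  define K where "K = real (k n)"
  have "K > 0"
    using \<open>k n \<ge> 1\<close> by (simp add: K_def)
  have "holds_except M (1/2) (\<lambda>\<omega>. \<forall>t\<in>{0<..1}.
      t powr \<kappa> * \<bar>(Q n t \<omega> - b n) / a n - \<phi> n * \<Psi> t\<bar> \<le> 1 / sqrt K + \<bar>\<phi> n\<bar> + H + CW / sqrt K)"
  proof (rule holds_except_mono[OF holds_except_conj[OF remainder_n CW[OF \<open>K > 0\<close>]]], safe)
    fix \<omega> and t :: real
    assume "\<forall>t\<in>{0<..1}. t powr \<kappa> * \<bar>remainder n t \<omega>\<bar> \<le> 1 / sqrt (real (k n)) + \<bar>\<phi> n\<bar>"
      and "\<forall>t\<in>{0<..1}. t powr \<kappa> * \<bar>t powr (-(\<gamma>+1)) * W (K*t) \<omega> / K\<bar> \<le> CW / sqrt K"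
      and "t \<in> {0<..1}"
    then show "t powr \<kappa> * \<bar>(Q n t \<omega> - b n) / a n - \<phi> n * \<Psi> t\<bar> \<le> 1 / sqrt K + \<bar>\<phi> n\<bar> + H + CW / sqrt K"
      using H unfolding remainder_def K_def by (intro weighted_deviation_le) auto
  qed simp
  then have "\<exists>B. \<forall>t\<in>{0<..1}. t powr \<kappa> * \<bar>\<phi> n * \<Psi> t\<bar> \<le> B"
    using Q_meas mono_n \<kappa>_pos by (intro bounded_drift_of_monotone_process[where Q="Q n"]) auto
  then obtain B where B: "\<forall>t\<in>{0<..1}. \<bar>\<phi> n\<bar> * (t powr \<kappa> * \<bar>\<Psi> t\<bar>) \<le> B"
    by (auto simp: abs_mult mult.left_commute)
  then have "\<forall>t\<in>{0<..1}. t powr \<kappa> * \<bar>\<Psi> t\<bar> \<le> B / \<bar>\<phi> n\<bar>"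
    using \<open>\<phi> n \<noteq> 0\<close> by (simp add: pos_le_divide_eq mult.commute)
  then show ?thesis
    by blast
qed

lemma weighted_increment_le:
  assumes K: "K = real (k n)" "K > 0" and \<phi>_n: "sqrt K * \<bar>\<phi> n\<bar> \<le> B\<Phi>"
    and B\<Psi>: "\<forall>t\<in>{0<..1}. t powr \<kappa> * \<bar>\<Psi> t\<bar> \<le> B\<Psi>"
    and remainder_bound: "\<forall>t\<in>{0<..1}. t powr \<kappa> * \<bar>remainder n t \<omega>\<bar> \<le> 1 / sqrt K + \<bar>\<phi> n\<bar>"
    and brownian_bound: "\<forall>t\<in>{0<..1}. t powr \<kappa> * \<bar>t powr (-(\<gamma>+1)) * W (K*t) \<omega> / K\<bar> \<le> CW / sqrt K"
    and t: "t \<in> {0<..1}"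
  shows "\<bar>t powr \<kappa> * (sqrt K * ((Q n t \<omega> - Q n 1 \<omega>) / a n - hfun \<gamma> t))\<bar>
           \<le> 2 * (1 + B\<Phi>) + 2 * CW + B\<Phi> * (B\<Psi> + \<bar>\<Psi> 1\<bar>)"
proof -
  have "1 \<in> {0<..1::real}"
    by simp
  have "\<bar>t powr \<kappa> * (sqrt K * ((Q n t \<omega> - b n) / a n - (Q n 1 \<omega> - b n) / a n - hfun \<gamma> t))\<bar>
        \<le> 2 * (1 + B\<Phi>) + 2 * CW + B\<Phi> * (B\<Psi> + \<bar>\<Psi> 1\<bar>)"
  proof (rule rescaled_increment_bound[where wt="t powr (-(\<gamma>+1)) * W (K*t) \<omega> / K"
        and we="W K \<omega> / K" and \<phi>="\<phi> n" and \<psi>t="\<Psi> t"])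
    show "0 \<le> t powr \<kappa>" "t powr \<kappa> \<le> 1" "sqrt K > 0"
      using t \<kappa>_pos K by (auto intro: powr_le1)
    show "t powr \<kappa> * \<bar>(Q n t \<omega> - b n) / a n - (hfun \<gamma> t - t powr (-(\<gamma>+1)) * W (K*t) \<omega> / K + \<phi> n * \<Psi> t)\<bar>
        \<le> 1 / sqrt K + \<bar>\<phi> n\<bar>"
      using remainder_bound t unfolding remainder_def K by blast
    show "\<bar>(Q n 1 \<omega> - b n) / a n - (0 - W K \<omega> / K + \<phi> n * \<Psi> 1)\<bar> \<le> 1 / sqrt K + \<bar>\<phi> n\<bar>"
      using bspec[OF remainder_bound \<open>1 \<in> {0<..1}\<close>] unfolding remainder_def K by simp
    show "t powr \<kappa> * \<bar>t powr (-(\<gamma>+1)) * W (K*t) \<omega> / K\<bar> \<le> CW / sqrt K"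
      using brownian_bound t by blast
    show "\<bar>W K \<omega> / K\<bar> \<le> CW / sqrt K"
      using bspec[OF brownian_bound \<open>1 \<in> {0<..1}\<close>] by simp
    show "t powr \<kappa> * \<bar>\<Psi> t\<bar> \<le> B\<Psi>"
      using B\<Psi> t by blast
  qed (fact \<phi>_n)
  then show ?thesis
    by (simp add: diff_divide_distrib)
qed

lemma weighted_tail_quantile_process_Op1:
  assumes B\<Phi>: "\<forall>\<^sub>F n in sequentially. sqrt (real (k n)) * \<bar>\<phi> n\<bar> \<le> B\<Phi>"
  shows "sup_Op1 M (\<lambda>n t \<omega>. t powr \<kappa> * (sqrt (real (k n)) * ((Q n t \<omega> - Q n 1 \<omega>) / a n - hfun \<gamma> t)))"
  unfolding sup_Op1_iff_holds_except
proof (intro allI impI)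
  fix \<delta> :: real
  assume "\<delta> > 0"
  obtain B\<Psi> where B\<Psi>: "\<forall>t\<in>{0<..1}. t powr \<kappa> * \<bar>\<Psi> t\<bar> \<le> B\<Psi>"
    using weighted_Psi_bounded by blast
  obtain CW where CW: "\<And>K. K > 0 \<Longrightarrow> holds_except M (\<delta>/2) (\<lambda>\<omega>. \<forall>t\<in>{0<..1}.
      t powr \<kappa> * \<bar>t powr (-(\<gamma>+1)) * W (K*t) \<omega> / K\<bar> \<le> CW / sqrt K)"
    using brownian_term_small[of "\<delta>/2"] \<open>\<delta> > 0\<close> by auto
  have "\<forall>\<^sub>F n in sequentially. holds_except M (\<delta>/2) (\<lambda>\<omega>. \<forall>t\<in>{0<..1}.
           t powr \<kappa> * \<bar>remainder n t \<omega>\<bar> \<le> 1 / sqrt (real (k n)) + \<bar>\<phi> n\<bar>)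
         \<and> k n \<ge> 1 \<and> sqrt (real (k n)) * \<bar>\<phi> n\<bar> \<le> B\<Phi>"
    using remainder_small[of "\<delta>/2"] \<open>\<delta> > 0\<close> k_ge_1 B\<Phi> by (intro eventually_conj) simp_all
  then show "\<exists>C. \<forall>\<^sub>F n in sequentially. holds_except M \<delta> (\<lambda>\<omega>. \<forall>t\<in>{0<..1}.
      \<bar>t powr \<kappa> * (sqrt (real (k n)) * ((Q n t \<omega> - Q n 1 \<omega>) / a n - hfun \<gamma> t))\<bar> \<le> C)"
  proof (intro exI[of _ "2 * (1 + B\<Phi>) + 2 * CW + B\<Phi> * (B\<Psi> + \<bar>\<Psi> 1\<bar>)"], elim eventually_mono conjE)
    fix n
    assume remainder_n: "holds_except M (\<delta>/2) (\<lambda>\<omega>. \<forall>t\<in>{0<..1}.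
           t powr \<kappa> * \<bar>remainder n t \<omega>\<bar> \<le> 1 / sqrt (real (k n)) + \<bar>\<phi> n\<bar>)"
      and "k n \<ge> 1" and "sqrt (real (k n)) * \<bar>\<phi> n\<bar> \<le> B\<Phi>"
    then have "real (k n) > 0"
      by simp
    show "holds_except M \<delta> (\<lambda>\<omega>. \<forall>t\<in>{0<..1}.
      \<bar>t powr \<kappa> * (sqrt (real (k n)) * ((Q n t \<omega> - Q n 1 \<omega>) / a n - hfun \<gamma> t))\<bar>
      \<le> 2 * (1 + B\<Phi>) + 2 * CW + B\<Phi> * (B\<Psi> + \<bar>\<Psi> 1\<bar>))"
    proof (rule holds_except_mono[OF holds_except_conj[OF remainder_n CW[OF \<open>real (k n) > 0\<close>]]], safe)
      fix \<omega> and t :: real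
      assume "\<forall>t\<in>{0<..1}. t powr \<kappa> * \<bar>remainder n t \<omega>\<bar> \<le> 1 / sqrt (real (k n)) + \<bar>\<phi> n\<bar>"
        and "\<forall>t\<in>{0<..1}. t powr \<kappa> * \<bar>t powr (-(\<gamma>+1)) * W (real (k n) * t) \<omega> / real (k n)\<bar>
               \<le> CW / sqrt (real (k n))"
        and "t \<in> {0<..1}"
      then show "\<bar>t powr \<kappa> * (sqrt (real (k n)) * ((Q n t \<omega> - Q n 1 \<omega>) / a n - hfun \<gamma> t))\<bar>
          \<le> 2 * (1 + B\<Phi>) + 2 * CW + B\<Phi> * (B\<Psi> + \<bar>\<Psi> 1\<bar>)"
        using \<open>real (k n) > 0\<close> \<open>sqrt (real (k n)) * \<bar>\<phi> n\<bar> \<le> B\<Phi>\<close> B\<Psi>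
        by (intro weighted_increment_le[OF refl]) auto
    qed (use \<open>\<delta> > 0\<close> in simp)
  qed
qed

end

theorem corollary3p1:
  fixes P :: "'b measure" and X :: "nat \<Rightarrow> 'b \<Rightarrow> real" and F :: "real \<Rightarrow> real"
    and k :: "nat \<Rightarrow> nat" and \<gamma>0 :: real
    and a \<Phi> \<Psi> :: "real \<Rightarrow> real"
    and M :: "'a measure" and W :: "real \<Rightarrow> 'a \<Rightarrow> real"
    and Q :: "nat \<Rightarrow> real \<Rightarrow> 'a \<Rightarrow> real"
    and a_t \<Phi>t :: "real \<Rightarrow> real"
  assumes P: "prob_space P"
    and X_meas: "\<And>i. X i \<in> borel_measurable P"
    and X_indep: "prob_space.indep_vars P (\<lambda>_. borel) X {1..}"
    and X_F: "\<And>i x. i \<ge> 1 \<Longrightarrow> measure P {\<omega>\<in>space P. X i \<omega> \<le> x} = F x"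
    and k_top: "filterlim k at_top sequentially"
    and k_o: "(\<lambda>n. real (k n) / real n) \<longlonglongrightarrow> 0"
    and \<gamma>0: "\<gamma>0 > - 1/2"
    and a_pos: "\<And>t. t \<in> {0<..<1} \<Longrightarrow> a t > 0"
    and \<Phi>_pos: "\<And>t. t \<in> {0<..<1} \<Longrightarrow> \<Phi> t > 0"
    and a_meas: "a \<in> borel_measurable (restrict_space borel {0<..<1})"
    and \<Phi>_meas: "\<Phi> \<in> borel_measurable (restrict_space borel {0<..<1})"
    and a_lb: "locally_bounded_on {0<..<1} a"
    and \<Phi>_lb: "locally_bounded_on {0<..<1} \<Phi>"
    and second_order: "\<And>x. x > 0 \<Longrightarrow>
       ((\<lambda>t. ((gen_inv F (1 - t * x) - gen_inv F (1 - t)) / a t - hfun \<gamma>0 x) / \<Phi> t)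
          \<longlongrightarrow> \<Psi> x) (at_right 0)"
    and \<Psi>_nonconst: "\<not> (\<exists>c. \<forall>x>0. x \<noteq> 1 \<longrightarrow> \<Psi> x / hfun \<gamma>0 x = c)"
    and \<Phi>_sign: "(\<forall>\<^sub>F t in at_right 0. \<Phi> t \<ge> 0) \<or> (\<forall>\<^sub>F t in at_right 0. \<Phi> t \<le> 0)"
    and \<Phi>_zero: "(\<Phi> \<longlongrightarrow> 0) (at_right 0)"
    and M: "prob_space M"
    and W: "std_brownian_motion M W"
    and Q_meas: "\<And>n t. Q n t \<in> borel_measurable M"
    and Q_distr: "\<And>n J. finite J \<Longrightarrow> J \<subseteq> {0..1} \<Longrightarrow>
       distr M (PiM J (\<lambda>_. borel)) (\<lambda>\<omega>. \<lambda>t\<in>J. Q n t \<omega>) =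
       distr P (PiM J (\<lambda>_. borel))
         (\<lambda>\<omega>. \<lambda>t\<in>J. order_stat X n (n - nat \<lfloor>real (k n) * t\<rfloor>) \<omega>)"
    and a_t_approx: "(\<lambda>n. a_t (real (k n) / real n) / a (real (k n) / real n) - 1)
                     \<in> o(\<lambda>n. \<Phi> (real (k n) / real n))"
    and \<Phi>t_equiv: "(\<lambda>n. \<Phi>t (real (k n) / real n)) \<sim>[sequentially] (\<lambda>n. \<Phi> (real (k n) / real n))"
    and approx: "\<And>\<epsilon>. \<epsilon> > 0 \<Longrightarrow> sup_op M
       (\<lambda>n t \<omega>. t powr (\<gamma>0 + 1/2 + \<epsilon>) *
          ((Q n t \<omega> - gen_inv F (1 - real (k n) / real n)) / a_t (real (k n) / real n)
           - (hfun \<gamma>0 t - t powr (- (\<gamma>0 + 1)) * W (real (k n) * t) \<omega> / real (k n)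
              + \<Phi>t (real (k n) / real n) * \<Psi> t)))
       (\<lambda>n. 1 / sqrt (real (k n)) + \<bar>\<Phi>t (real (k n) / real n)\<bar>)"
    and \<Phi>_rate: "(\<lambda>n. \<Phi> (real (k n) / real n)) \<in> O(\<lambda>n. 1 / sqrt (real (k n)))"
  shows "\<forall>\<epsilon>>0. sup_Op1 M
     (\<lambda>n t \<omega>. t powr (\<gamma>0 + 1/2 + \<epsilon>) *
        (sqrt (real (k n)) * ((Q n t \<omega> - Q n 1 \<omega>) / a_t (real (k n) / real n) - hfun \<gamma>0 t)))"
proof (intro allI impI)
  fix \<epsilon> :: real
  assume "\<epsilon> > 0"
  have "\<forall>\<^sub>F n in sequentially. \<Phi> (real (k n) / real n) > 0"
    using eventually_ratio_in_unit_interval[OF k_top k_o] by eventually_elim (rule \<Phi>_pos)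
  then have \<Phi>t_nonzero: "\<forall>\<^sub>F n in sequentially. \<Phi>t (real (k n) / real n) \<noteq> 0"
    using asymp_equiv_eventually_zeros[OF \<Phi>t_equiv] by eventually_elim auto
  interpret tail_quantile_approximation M W Q k "\<lambda>n. a_t (real (k n) / real n)"
      "\<lambda>n. gen_inv F (1 - real (k n) / real n)" "\<lambda>n. \<Phi>t (real (k n) / real n)" \<Psi> \<gamma>0 \<epsilon>
    using M W Q_meas eventually_order_stat_process_mono[OF Q_meas Q_distr] k_top \<gamma>0 \<open>\<epsilon> > 0\<close>
      \<Phi>t_nonzero approx[OF \<open>\<epsilon> > 0\<close>]
    by (simp add: tail_quantile_approximation_def tail_quantile_approximation_axioms_def)
  obtain B\<Phi> where "\<forall>\<^sub>F n in sequentially. sqrt (real (k n)) * \<bar>\<Phi>t (real (k n) / real n)\<bar> \<le> B\<Phi>"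
    using sqrt_mult_bounded_of_bigo[OF landau_o.big_trans[OF asymp_equiv_imp_bigo[OF \<Phi>t_equiv] \<Phi>_rate]]
    by blast
  then show "sup_Op1 M (\<lambda>n t \<omega>. t powr (\<gamma>0 + 1/2 + \<epsilon>) *
        (sqrt (real (k n)) * ((Q n t \<omega> - Q n 1 \<omega>) / a_t (real (k n) / real n) - hfun \<gamma>0 t)))"
    by (rule weighted_tail_quantile_process_Op1)
qed

end
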